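(* Let $\lambda=(\lambda_1,\ldots,\lambda_\ell)$ be a partition with $\ell$ positive parts, and let $n\geq\ell$. If there exists $p\in\{1,\ldots,\ell-2\}$ such that $\lambda_p-2\geq\lambda_{p+1}\geq\lambda_{p+2}$, then the poset $\mathcal B_\lambda^n$ is not a lattice.
   Context: For $N\geq 1$ and a partition $\nu$ with at most $N$ positive parts, $\mathcal B_\nu^N$ is the set of semistandard Young tableaux of shape $\nu$ (rows weakly increasing, columns strictly increasing) with entries in $\{1,\ldots,N+1\}$, partially ordered by the reflexive transitive closure of $T<F_i(T)$ for $i\in\{1,\ldots,N\}$ with $F_i(T)\neq 0$. Here $F_i$ is the type A crystal lowering operator: in the reading word of $T$ (rows read from bottom to top, each row left to right) keep only letters $i$ and $i+1$, replace each $i$ by ")" and each $i+1$ by "(", and match parentheses in the usual way; if there is no unmatched ")", $F_i(T)=0$; otherwise $F_i(T)$ is obtained by changing the entry $i$ corresponding to the rightmost unmatched ")" into $i+1$. *)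

theory Defs
  imports Main
begin

text \<open>Partitions: lists of positive parts, weakly decreasing.  Part lambda_k is lam ! (k-1).\<close>
definition is_partition :: "nat list \<Rightarrow> bool" where
  "is_partition lam \<longleftrightarrow> sorted_wrt (\<ge>) lam \<and> (\<forall>x\<in>set lam. 0 < x)"

text \<open>A tableau is a list of rows (top row first); row k has length nu ! k.
  Semistandard with entries in {1..N+1}.\<close>
definition ssyt :: "nat \<Rightarrow> nat list \<Rightarrow> nat list list \<Rightarrow> bool" where
  "ssyt N nu T \<longleftrightarrow>
     map length T = nu \<and>
     (\<forall>r\<in>set T. sorted r \<and> (\<forall>x\<in>set r. 1 \<le> x \<and> x \<le> N + 1)) \<and>
     (\<forall>k j. Suc k < length T \<longrightarrow> j < length (T ! Suc k) \<longrightarrow> T ! k ! j < T ! Suc k ! j)"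

definition tableaux :: "nat \<Rightarrow> nat list \<Rightarrow> nat list list set" where
  "tableaux N nu = {T. ssyt N nu T}"

definition reading_word :: "nat list list \<Rightarrow> nat list" where
  "reading_word T = concat (rev T)"

text \<open>Positions (in increasing order) of unmatched letters i (= ")") in a word, where
  letters i+1 are "(" and each ")" is matched with the nearest preceding unmatched "(".
  c counts currently unmatched "(", k is the current position.\<close>
fun unmatched :: "nat \<Rightarrow> nat \<Rightarrow> nat list \<Rightarrow> nat \<Rightarrow> nat list" where
  "unmatched i c [] k = []"
| "unmatched i c (x # xs) k =
     (if x = Suc i then unmatched i (Suc c) xs (Suc k)
      else if x = i then (if 0 < c then unmatched i (c - 1) xs (Suc k)
                          else k # unmatched i c xs (Suc k))
      else unmatched i c xs (Suc k))"

definition F_word :: "nat \<Rightarrow> nat list \<Rightarrow> nat list option" where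
  "F_word i w = (let u = unmatched i 0 w 0 in
     if u = [] then None else Some (w[last u := Suc i]))"

fun split_by :: "nat list \<Rightarrow> 'a list \<Rightarrow> 'a list list" where
  "split_by [] w = []"
| "split_by (l # ls) w = take l w # split_by ls (drop l w)"

text \<open>Crystal lowering operator F_i on tableaux; None represents 0.\<close>
definition F_tab :: "nat \<Rightarrow> nat list list \<Rightarrow> nat list list option" where
  "F_tab i T = map_option (\<lambda>w. rev (split_by (map length (rev T)) w)) (F_word i (reading_word T))"

definition crystal_step :: "nat \<Rightarrow> nat list \<Rightarrow> (nat list list \<times> nat list list) set" where
  "crystal_step N nu = {(T, T'). T \<in> tableaux N nu \<and> (\<exists>i\<in>{1..N}. F_tab i T = Some T')}"

definition crystal_le :: "nat \<Rightarrow> nat list \<Rightarrow> nat list list \<Rightarrow> nat list list \<Rightarrow> bool" where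
  "crystal_le N nu S T \<longleftrightarrow> (S, T) \<in> (crystal_step N nu)\<^sup>*"

definition is_lub :: "'a set \<Rightarrow> ('a \<Rightarrow> 'a \<Rightarrow> bool) \<Rightarrow> 'a \<Rightarrow> 'a \<Rightarrow> 'a \<Rightarrow> bool" where
  "is_lub A le x y z \<longleftrightarrow> z \<in> A \<and> le x z \<and> le y z \<and> (\<forall>w\<in>A. le x w \<and> le y w \<longrightarrow> le z w)"

definition is_glb :: "'a set \<Rightarrow> ('a \<Rightarrow> 'a \<Rightarrow> bool) \<Rightarrow> 'a \<Rightarrow> 'a \<Rightarrow> 'a \<Rightarrow> bool" where
  "is_glb A le x y z \<longleftrightarrow> z \<in> A \<and> le z x \<and> le z y \<and> (\<forall>w\<in>A. le w x \<and> le w y \<longrightarrow> le w z)"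

definition is_lattice :: "'a set \<Rightarrow> ('a \<Rightarrow> 'a \<Rightarrow> bool) \<Rightarrow> bool" where
  "is_lattice A le \<longleftrightarrow> (\<forall>x\<in>A. \<forall>y\<in>A. (\<exists>z. is_lub A le x y z) \<and> (\<exists>z. is_glb A le x y z))"

end

theory Submission
  imports Defs
begin

(*
  Let only rows p, p+1, p+2 vary and freeze all other rows with entries that F_p, F_(p+1) and
  F_(p+2) cannot see, so that these operators act on the reading word of the three rows alone.
  Every F_i raises the entry sum by one, so the order is graded by it. Inside the window there
  are tableaux tA, tB of equal rank with upper bounds tD and tC two and three ranks higher, such
  that tA and tB have no common cover and tD is not covered by tC. A join of tA and tB lies below
  tD: at the rank of tA it would force tA = tB, one rank higher it would be a common cover, and at
  the rank of tD it would be tD itself, which would then be covered by tC.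
  The hypothesis lambda_p >= lambda_(p+1) + 2 is what lets F_p act on row p of tA and tB1: their
  entries p in row p outnumber the entries p+1 of row p+1.
*)

section \<open>Crystal operators on reading words\<close>

lemma unmatched_replicate_append:
  "unmatched i c (replicate m x @ ys) k =
    (if x = Suc i then unmatched i (c + m) ys (k + m)
     else if x = i then [k + c..<k + m] @ unmatched i (c - m) ys (k + m)
     else unmatched i c ys (k + m))"
proof (induction m arbitrary: c k)
  case 0
  then show ?case by simp
next
  case (Suc m)
  show ?case
  proof (cases "x = i \<and> c = 0")
    case True
    then show ?thesis using Suc by (simp add: upt_rec)
  next
    case False
    then show ?thesis
      using Suc.IH[of "c - 1" "Suc k"] Suc.IH[of "Suc c" "Suc k"] Suc.IH[of c "Suc k"] by auto
  qed
qed

lemma unmatched_shift: "unmatched i c w (k + d) = map ((+) d) (unmatched i c w k)"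
  by (induction i c w k rule: unmatched.induct) auto

lemma unmatched_inert_prefix:
  assumes "i \<notin> set X" "Suc i \<notin> set X"
  shows "unmatched i c (X @ w) k = unmatched i c w (k + length X)"
  using assms by (induction X arbitrary: k) auto

lemma unmatched_inert_suffix:
  assumes "i \<notin> set Y" "Suc i \<notin> set Y"
  shows "unmatched i c (w @ Y) k = unmatched i c w k"
proof -
  have "unmatched i c' Y k' = []" for c' k'
    using assms by (induction Y arbitrary: c' k') auto
  then show ?thesis by (induction i c w k rule: unmatched.induct) auto
qed

lemma unmatched_inert_context:
  assumes "i \<notin> set X" "Suc i \<notin> set X" "i \<notin> set Y" "Suc i \<notin> set Y"
  shows "unmatched i 0 (X @ w @ Y) 0 = map ((+) (length X)) (unmatched i 0 w 0)"
  using unmatched_inert_prefix[of i X 0 "w @ Y" 0] unmatched_inert_suffix[of i Y 0 w "length X"]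
    unmatched_shift[of i 0 w 0 "length X"] assms
  by simp

lemma unmatched_nth:
  "j \<in> set (unmatched i c w k) \<Longrightarrow> k \<le> j \<and> j < k + length w \<and> w ! (j - k) = i"
  by (induction i c w k rule: unmatched.induct) (auto split: if_splits simp: nth_Cons')

lemma F_word_SomeD:
  assumes "F_word i w = Some w'"
  shows "\<exists>k\<in>set (unmatched i 0 w 0). k < length w \<and> w ! k = i \<and> w' = w[k := Suc i]"
proof -
  let ?u = "unmatched i 0 w 0"
  have "?u \<noteq> []" and "w' = w[last ?u := Suc i]"
    using assms by (auto simp: F_word_def Let_def split: if_splits)
  then show ?thesis using unmatched_nth[of "last ?u" i 0 w 0] by fastforce
qed

lemma F_word_inert_context:
  assumes "i \<notin> set X" "Suc i \<notin> set X" "i \<notin> set Y" "Suc i \<notin> set Y"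
  shows "F_word i (X @ w @ Y) = map_option (\<lambda>w'. X @ w' @ Y) (F_word i w)"
proof (cases "unmatched i 0 w 0 = []")
  case True
  then show ?thesis using unmatched_inert_context[OF assms] by (simp add: F_word_def Let_def)
next
  case False
  then have "last (unmatched i 0 w 0) < length w"
    using unmatched_nth[of "last (unmatched i 0 w 0)" i 0 w 0] by fastforce
  then show ?thesis using False unmatched_inert_context[OF assms]
    by (simp add: F_word_def Let_def last_map list_update_append)
qed

lemma list_update_eq_imp_differing_index:
  assumes "u[k := a] = v[l := b]" and "u ! p \<noteq> v ! p"
  shows "k = p \<or> l = p"
  using assms by (metis nth_list_update_neq)

lemma concat_split_by: "length w = sum_list ls \<Longrightarrow> concat (split_by ls w) = w"
  by (induction ls arbitrary: w) (auto simp: min_def)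

lemma split_by_concat: "split_by (map length Ts) (concat Ts) = Ts"
  by (induction Ts) auto

lemma F_tab_SomeD:
  assumes "F_tab i T = Some T'"
  shows "\<exists>k\<in>set (unmatched i 0 (reading_word T) 0). k < length (reading_word T) \<and>
           reading_word T ! k = i \<and> reading_word T' = (reading_word T)[k := Suc i]"
proof -
  obtain w' where w': "F_word i (reading_word T) = Some w'"
    and T': "T' = rev (split_by (map length (rev T)) w')"
    using assms by (auto simp: F_tab_def)
  have "length w' = sum_list (map length (rev T))"
    using F_word_SomeD[OF w'] by (auto simp: reading_word_def length_concat)
  then have "reading_word T' = w'"
    by (simp add: T' reading_word_def concat_split_by)
  then show ?thesis using F_word_SomeD[OF w'] by simp
qed

lemma F_tab_eq_SomeI:
  assumes "F_word i (reading_word T) = Some (reading_word T')" and "map length T' = map length T"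
  shows "F_tab i T = Some T'"
proof -
  have "map length (rev T) = map length (rev T')"
    using assms(2) by (simp add: rev_map[symmetric])
  then have "split_by (map length (rev T)) (reading_word T') = rev T'"
    using split_by_concat[of "rev T'"] by (simp add: reading_word_def)
  then show ?thesis
    using assms(1) by (simp add: F_tab_def)
qed

lemma crystal_step_changes_one_entry:
  assumes "(S, T) \<in> crystal_step N nu"
    and "reading_word S ! p \<noteq> reading_word T ! p" "reading_word S ! q \<noteq> reading_word T ! q"
  shows "p = q"
  using assms by (auto simp: crystal_step_def dest!: F_tab_SomeD) (metis nth_list_update_neq)

section \<open>The crystal order is graded\<close>

definition entry_sum :: "nat list list \<Rightarrow> nat" where
  "entry_sum T = sum_list (reading_word T)"

lemma crystal_step_entry_sum:
  assumes "(S, T) \<in> crystal_step N nu"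
  shows "entry_sum T = Suc (entry_sum S)"
proof -
  obtain i where "F_tab i S = Some T"
    using assms by (auto simp: crystal_step_def)
  then obtain k where k: "k < length (reading_word S)" "reading_word S ! k = i"
    "reading_word T = (reading_word S)[k := Suc i]"
    using F_tab_SomeD by blast
  then have "i \<le> sum_list (reading_word S)"
    by (metis elem_le_sum_list)
  then show ?thesis
    using k sum_list_update[OF k(1), of "Suc i"] by (simp add: entry_sum_def)
qed

lemma relpow_graded:
  assumes graded: "\<And>x y. (x, y) \<in> R \<Longrightarrow> rk y = Suc (rk x)"
    and "(x, y) \<in> R ^^ m"
  shows "rk y = rk x + m"
  using assms(2) by (induction m arbitrary: y) (auto dest: graded)

lemma graded_no_lub:
  assumes graded: "\<And>x y. (x, y) \<in> R \<Longrightarrow> rk y = Suc (rk x)"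
    and le: "\<And>x y. le x y \<longleftrightarrow> (x, y) \<in> R\<^sup>*"
    and "c \<in> A" "d \<in> A"
    and ac: "(a, c) \<in> R ^^ 3" and "(b, c) \<in> R\<^sup>*"
    and ad: "(a, d) \<in> R ^^ 2" and bd: "(b, d) \<in> R ^^ 2"
    and "(d, c) \<notin> R"
    and no_common_cover: "\<nexists>w. (a, w) \<in> R \<and> (b, w) \<in> R"
  shows "\<not> is_lub A le a b z"
proof
  assume "is_lub A le a b z"
  moreover have "(a, c) \<in> R\<^sup>*" "(a, d) \<in> R\<^sup>*" "(b, d) \<in> R\<^sup>*"
    using ac ad bd relpow_imp_rtrancl by blast+
  ultimately have "(a, z) \<in> R\<^sup>*" "(b, z) \<in> R\<^sup>*" "(z, c) \<in> R\<^sup>*" "(z, d) \<in> R\<^sup>*"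
    using assms by (auto simp: is_lub_def)
  then obtain ma mb mc md where
    paths: "(a, z) \<in> R ^^ ma" "(b, z) \<in> R ^^ mb" "(z, c) \<in> R ^^ mc" "(z, d) \<in> R ^^ md"
    by (metis rtrancl_imp_relpow)
  note rank = relpow_graded[of R rk, OF graded]
  have "rk c = rk a + 3" "rk d = rk a + 2" "rk d = rk b + 2"
    using rank ac ad bd by blast+
  moreover have "rk z = rk a + ma" "rk z = rk b + mb" "rk c = rk z + mc" "rk d = rk z + md"
    using rank paths by blast+
  ultimately have "mb = ma" "ma + md = 2" "mc = md + 1"
    by linarith+
  then consider "ma = 0" | "ma = 1" | "ma = 2 \<and> md = 0 \<and> mc = 1"
    by linarith
  then show False
  proof cases
    case 1
    then have "a = b"
      using paths \<open>mb = ma\<close> by simp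
    moreover obtain w where "(a, w) \<in> R"
      using ad by (auto simp: numeral_2_eq_2 relpow_Suc_D2')
    ultimately show False
      using no_common_cover by blast
  next
    case 2
    then have "(a, z) \<in> R" "(b, z) \<in> R"
      using paths \<open>mb = ma\<close> by simp_all
    then show False
      using no_common_cover by blast
  next
    case 3
    then have "(d, c) \<in> R"
      using paths by simp
    then show False
      using \<open>(d, c) \<notin> R\<close> by blast
  qed
qed

section \<open>Tableaux varying only in three consecutive rows\<close>

lemma is_partition_nth_antimono:
  assumes "is_partition lam" "i \<le> j" "j < length lam"
  shows "lam ! j \<le> lam ! i"
  using assms by (cases "i = j") (auto simp: is_partition_def sorted_wrt_iff_nth_less)

lemma is_partition_nth_pos:
  assumes "is_partition lam" "j < length lam"
  shows "0 < lam ! j"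
  using assms by (auto simp: is_partition_def)

locale three_row_window =
  fixes lam :: "nat list" and n P :: nat
  assumes partition: "is_partition lam"
    and length_le: "length lam \<le> n"
    and window: "Suc (Suc P) < length lam"
begin

(* r0, r1, r2 become the 0-based rows P, P+1, P+2. The frozen row k is constant k+1 above and
   k+2 below the window: this leaves room for the entries P+1..P+4 inside the window and keeps
   these letters out of the frozen rows. *)
definition window_tableau :: "nat list \<Rightarrow> nat list \<Rightarrow> nat list \<Rightarrow> nat list list" where
  "window_tableau r0 r1 r2 = map (\<lambda>k.
     if k = P then r0 else if k = Suc P then r1 else if k = Suc (Suc P) then r2
     else replicate (lam ! k) (if k < P then Suc k else Suc (Suc k))) [0..<length lam]"

definition below_word :: "nat list" where
  "below_word = concat (rev (map (\<lambda>k. replicate (lam ! k) (Suc (Suc k))) [P + 3..<length lam]))"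

definition above_word :: "nat list" where
  "above_word = concat (rev (map (\<lambda>k. replicate (lam ! k) (Suc k)) [0..<P]))"

lemma reading_word_window_tableau:
  "reading_word (window_tableau r0 r1 r2) = below_word @ (r2 @ r1 @ r0) @ above_word"
proof -
  let ?row = "\<lambda>k. if k = P then r0 else if k = Suc P then r1 else if k = Suc (Suc P) then r2
     else replicate (lam ! k) (if k < P then Suc k else Suc (Suc k))"
  have "[P..<length lam] = [P, Suc P, Suc (Suc P)] @ [P + 3..<length lam]"
    using window by (simp add: upt_conv_Cons numeral_3_eq_3)
  then have rows: "[0..<length lam] = [0..<P] @ [P, Suc P, Suc (Suc P)] @ [P + 3..<length lam]"
    using upt_add_eq_append[of 0 P "length lam - P"] window by simp
  have above: "map ?row [0..<P] = map (\<lambda>k. replicate (lam ! k) (Suc k)) [0..<P]"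
    by simp
  have below: "map ?row [P + 3..<length lam] =
      map (\<lambda>k. replicate (lam ! k) (Suc (Suc k))) [P + 3..<length lam]"
    by simp
  show ?thesis
    unfolding reading_word_def window_tableau_def rows map_append above below
    by (simp add: below_word_def above_word_def)
qed

lemma below_word_entries: "v \<in> set below_word \<Longrightarrow> P + 5 \<le> v"
  by (auto simp: below_word_def)

lemma above_word_entries: "v \<in> set above_word \<Longrightarrow> v \<le> P"
  by (auto simp: above_word_def)

lemma length_window_tableau: "length (window_tableau r0 r1 r2) = length lam"
  by (simp add: window_tableau_def)

lemma nth_window_tableau:
  "k < length lam \<Longrightarrow> window_tableau r0 r1 r2 ! k =
     (if k = P then r0 else if k = Suc P then r1 else if k = Suc (Suc P) then r2
      else replicate (lam ! k) (if k < P then Suc k else Suc (Suc k)))"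
  by (simp add: window_tableau_def)

lemma outside_window_inert:
  assumes "Suc P \<le> i" "i \<le> P + 3"
  shows "i \<notin> set below_word" "Suc i \<notin> set below_word"
    and "i \<notin> set above_word" "Suc i \<notin> set above_word"
  using below_word_entries above_word_entries assms by fastforce+

lemma unmatched_window_tableau:
  assumes "Suc P \<le> i" "i \<le> P + 3"
  shows "unmatched i 0 (reading_word (window_tableau r0 r1 r2)) 0 =
    map ((+) (length below_word)) (unmatched i 0 (r2 @ r1 @ r0) 0)"
  unfolding reading_word_window_tableau
  using unmatched_inert_context[OF outside_window_inert[OF assms]] .

lemma F_tab_window_tableau:
  assumes "Suc P \<le> i" "i \<le> P + 3"
    and "F_word i (r2 @ r1 @ r0) = Some (s2 @ s1 @ s0)"
    and "length s0 = length r0" "length s1 = length r1" "length s2 = length r2"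
  shows "F_tab i (window_tableau r0 r1 r2) = Some (window_tableau s0 s1 s2)"
proof (rule F_tab_eq_SomeI)
  show "F_word i (reading_word (window_tableau r0 r1 r2)) =
      Some (reading_word (window_tableau s0 s1 s2))"
    unfolding reading_word_window_tableau
    using F_word_inert_context[OF outside_window_inert[OF assms(1,2)], of "r2 @ r1 @ r0"] assms(3)
    by simp
  show "map length (window_tableau s0 s1 s2) = map length (window_tableau r0 r1 r2)"
    using assms(4-6) by (simp add: window_tableau_def)
qed

lemma window_tableau_columns_strict:
  assumes lengths: "length r0 = lam ! P" "length r1 = lam ! Suc P" "length r2 = lam ! Suc (Suc P)"
    and entries: "\<forall>v\<in>set (r0 @ r1 @ r2). Suc P \<le> v \<and> v \<le> P + 4"
    and columns: "\<forall>j<length r1. r0 ! j < r1 ! j" "\<forall>j<length r2. r1 ! j < r2 ! j"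
    and k: "Suc k < length lam" and j_below: "j < lam ! Suc k"
  shows "window_tableau r0 r1 r2 ! k ! j < window_tableau r0 r1 r2 ! Suc k ! j"
proof -
  have j_above: "j < lam ! k"
    using is_partition_nth_antimono[OF partition, of k "Suc k"] k j_below by simp
  consider "Suc k < P" | "Suc k = P" | "k = P" | "k = Suc P" | "k = Suc (Suc P)" | "Suc (Suc P) < k"
    by linarith
  then show ?thesis
  proof cases
    case 2
    then have "Suc P \<le> r0 ! j"
      using entries j_below lengths(1) by auto
    then show ?thesis using 2 k j_below j_above by (simp add: nth_window_tableau)
  next
    case 3
    then show ?thesis using k j_below columns(1) lengths(2) by (auto simp: nth_window_tableau)
  next
    case 4
    then show ?thesis using k j_below columns(2) lengths(3) by (auto simp: nth_window_tableau)
  next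
    case 5
    then have "r2 ! j \<le> P + 4"
      using entries j_above lengths(3) by auto
    then show ?thesis using 5 k j_below j_above by (simp add: nth_window_tableau)
  qed (use k j_below j_above in \<open>simp_all add: nth_window_tableau\<close>)
qed

lemma window_tableau_in_tableaux:
  assumes lengths: "length r0 = lam ! P" "length r1 = lam ! Suc P" "length r2 = lam ! Suc (Suc P)"
    and sorted: "sorted r0" "sorted r1" "sorted r2"
    and entries: "\<forall>v\<in>set (r0 @ r1 @ r2). Suc P \<le> v \<and> v \<le> P + 4"
    and columns: "\<forall>j<length r1. r0 ! j < r1 ! j" "\<forall>j<length r2. r1 ! j < r2 ! j"
  shows "window_tableau r0 r1 r2 \<in> tableaux n lam"
  unfolding tableaux_def ssyt_def mem_Collect_eq
proof (intro conjI)
  let ?T = "window_tableau r0 r1 r2"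
  show "map length ?T = lam"
    by (rule nth_equalityI) (auto simp: length_window_tableau nth_window_tableau lengths)
  show "\<forall>r\<in>set ?T. sorted r \<and> (\<forall>x\<in>set r. 1 \<le> x \<and> x \<le> n + 1)"
  proof
    fix r assume "r \<in> set ?T"
    then obtain k where "k < length lam" "r = ?T ! k"
      by (auto simp: in_set_conv_nth length_window_tableau)
    moreover have "\<forall>v\<in>set (r0 @ r1 @ r2). 1 \<le> v \<and> v \<le> n + 1"
      using entries window length_le by fastforce
    ultimately show "sorted r \<and> (\<forall>x\<in>set r. 1 \<le> x \<and> x \<le> n + 1)"
      using sorted length_le by (auto simp: nth_window_tableau)
  qed
  show "\<forall>k j. Suc k < length ?T \<longrightarrow> j < length (?T ! Suc k) \<longrightarrow> ?T ! k ! j < ?T ! Suc k ! j"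
  proof (intro allI impI)
    fix k j assume "Suc k < length ?T" "j < length (?T ! Suc k)"
    then show "?T ! k ! j < ?T ! Suc k ! j"
      using \<open>map length ?T = lam\<close> window_tableau_columns_strict[OF lengths entries columns]
      by (metis length_map nth_map)
  qed
qed

lemma crystal_step_window_tableau:
  assumes "window_tableau r0 r1 r2 \<in> tableaux n lam"
    and "Suc P \<le> i" "i \<le> P + 3"
    and "F_word i (r2 @ r1 @ r0) = Some (s2 @ s1 @ s0)"
    and "length s0 = length r0" "length s1 = length r1" "length s2 = length r2"
  shows "(window_tableau r0 r1 r2, window_tableau s0 s1 s2) \<in> crystal_step n lam"
  using F_tab_window_tableau[OF assms(2-)] assms(1-3) window length_le
  by (auto simp: crystal_step_def)

end

section \<open>Two tableaux without a join\<close>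

lemma replicate_list_update:
  "k < m \<Longrightarrow> (replicate m v)[k := w] = replicate k v @ w # replicate (m - k - 1) v"
proof (induction m arbitrary: k)
  case 0
  then show ?case by simp
next
  case (Suc m)
  then show ?case by (cases k) auto
qed

lemmas F_word_replicate_simps =
  F_word_def Let_def unmatched_replicate_append list_update_append replicate_list_update

locale gap_window = three_row_window +
  fixes x y z :: nat
  assumes row_lengths: "lam ! P = x + 2" "lam ! Suc P = Suc y" "lam ! Suc (Suc P) = Suc z"
    and gap: "y < x" and flat: "z \<le> y"
begin

definition tA :: "nat list list" where
  "tA = window_tableau (replicate (Suc x) (Suc P) @ [P + 3])
    (replicate (Suc y) (P + 2)) (replicate z (P + 3) @ [P + 4])"

definition tA1 :: "nat list list" where
  "tA1 = window_tableau (replicate x (Suc P) @ [P + 2, P + 3])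
    (replicate (Suc y) (P + 2)) (replicate z (P + 3) @ [P + 4])"

definition tA2 :: "nat list list" where
  "tA2 = window_tableau (replicate x (Suc P) @ [P + 3, P + 3])
    (replicate (Suc y) (P + 2)) (replicate z (P + 3) @ [P + 4])"

definition tA' :: "nat list list" where
  "tA' = window_tableau (replicate (Suc x) (Suc P) @ [P + 3])
    (replicate y (P + 2) @ [P + 3]) (replicate z (P + 3) @ [P + 4])"

definition tB :: "nat list list" where
  "tB = window_tableau (replicate (Suc x) (Suc P) @ [P + 4])
    (replicate (Suc y) (P + 2)) (replicate (Suc z) (P + 3))"

definition tB1 :: "nat list list" where
  "tB1 = window_tableau (replicate (Suc x) (Suc P) @ [P + 4])
    (replicate (Suc y) (P + 2)) (replicate z (P + 3) @ [P + 4])"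

definition tB2 :: "nat list list" where
  "tB2 = window_tableau (replicate x (Suc P) @ [P + 2, P + 4])
    (replicate (Suc y) (P + 2)) (replicate z (P + 3) @ [P + 4])"

definition tC :: "nat list list" where
  "tC = window_tableau (replicate x (Suc P) @ [P + 3, P + 4])
    (replicate (Suc y) (P + 2)) (replicate z (P + 3) @ [P + 4])"

definition tD :: "nat list list" where
  "tD = window_tableau (replicate (Suc x) (Suc P) @ [P + 4])
    (replicate y (P + 2) @ [P + 3]) (replicate z (P + 3) @ [P + 4])"

lemma in_tableaux:
  "tA \<in> tableaux n lam" "tA1 \<in> tableaux n lam" "tA2 \<in> tableaux n lam" "tA' \<in> tableaux n lam"
  "tB \<in> tableaux n lam" "tB1 \<in> tableaux n lam" "tB2 \<in> tableaux n lam"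
  "tC \<in> tableaux n lam" "tD \<in> tableaux n lam"
  unfolding tA_def tA1_def tA2_def tA'_def tB_def tB1_def tB2_def tC_def tD_def
  using gap flat
  by (auto intro!: window_tableau_in_tableaux
      simp: row_lengths nth_append sorted_append nth_replicate simp del: replicate.simps)

lemma edge_A_A1: "(tA, tA1) \<in> crystal_step n lam"
  using in_tableaux unfolding tA_def tA1_def
  by (intro crystal_step_window_tableau[where i = "Suc P"])
    (use gap flat in \<open>simp_all add: F_word_replicate_simps del: replicate.simps\<close>)

lemma edge_A1_A2: "(tA1, tA2) \<in> crystal_step n lam"
  using in_tableaux unfolding tA1_def tA2_def
  by (intro crystal_step_window_tableau[where i = "P + 2"])
    (use gap flat in \<open>simp_all add: F_word_replicate_simps del: replicate.simps\<close>)

lemma edge_A2_C: "(tA2, tC) \<in> crystal_step n lam"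
  using in_tableaux unfolding tA2_def tC_def
  by (intro crystal_step_window_tableau[where i = "P + 3"])
    (use gap flat in \<open>simp_all add: F_word_replicate_simps del: replicate.simps\<close>)

lemma edge_A_A': "(tA, tA') \<in> crystal_step n lam"
  using in_tableaux unfolding tA_def tA'_def
  by (intro crystal_step_window_tableau[where i = "P + 2"])
    (use gap flat in \<open>simp_all add: F_word_replicate_simps del: replicate.simps\<close>)

lemma edge_A'_D: "(tA', tD) \<in> crystal_step n lam"
  using in_tableaux unfolding tA'_def tD_def
  by (intro crystal_step_window_tableau[where i = "P + 3"])
    (use gap flat in \<open>simp_all add: F_word_replicate_simps del: replicate.simps\<close>)

lemma edge_B_B1: "(tB, tB1) \<in> crystal_step n lam"
  using in_tableaux unfolding tB_def tB1_def
  by (intro crystal_step_window_tableau[where i = "P + 3"])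
    (use gap flat in \<open>simp_all add: F_word_replicate_simps del: replicate.simps\<close>)

lemma edge_B1_D: "(tB1, tD) \<in> crystal_step n lam"
  using in_tableaux unfolding tB1_def tD_def
  by (intro crystal_step_window_tableau[where i = "P + 2"])
    (use gap flat in \<open>simp_all add: F_word_replicate_simps del: replicate.simps\<close>)

lemma edge_B1_B2: "(tB1, tB2) \<in> crystal_step n lam"
  using in_tableaux unfolding tB1_def tB2_def
  by (intro crystal_step_window_tableau[where i = "Suc P"])
    (use gap flat in \<open>simp_all add: F_word_replicate_simps del: replicate.simps\<close>)

lemma edge_B2_C: "(tB2, tC) \<in> crystal_step n lam"
  using in_tableaux unfolding tB2_def tC_def
  by (intro crystal_step_window_tableau[where i = "P + 2"])
    (use gap flat in \<open>simp_all add: F_word_replicate_simps del: replicate.simps\<close>)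

lemma paths_to_upper_bounds:
  "(tA, tC) \<in> crystal_step n lam ^^ 3" "(tB, tC) \<in> (crystal_step n lam)\<^sup>*"
  "(tA, tD) \<in> crystal_step n lam ^^ 2" "(tB, tD) \<in> crystal_step n lam ^^ 2"
proof -
  show "(tA, tC) \<in> crystal_step n lam ^^ 3"
    using edge_A_A1 edge_A1_A2 edge_A2_C by (auto simp: numeral_3_eq_3)
  show "(tA, tD) \<in> crystal_step n lam ^^ 2" "(tB, tD) \<in> crystal_step n lam ^^ 2"
    using edge_A_A' edge_A'_D edge_B_B1 edge_B1_D by (auto simp: numeral_2_eq_2)
  show "(tB, tC) \<in> (crystal_step n lam)\<^sup>*"
    using edge_B_B1 edge_B1_B2 edge_B2_C by (blast intro: rtrancl_into_rtrancl)
qed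

lemma tD_not_covered_by_tC: "(tD, tC) \<notin> crystal_step n lam"
proof
  define p where "p = length below_word + (z + 1 + y)"
  define q where "q = length below_word + (z + 1 + Suc y + x)"
  assume "(tD, tC) \<in> crystal_step n lam"
  moreover have "reading_word tD ! p \<noteq> reading_word tC ! p"
    and "reading_word tD ! q \<noteq> reading_word tC ! q"
    unfolding tD_def tC_def reading_word_window_tableau p_def q_def
    using gap by (simp_all add: nth_append del: replicate.simps)
  ultimately have "p = q"
    by (rule crystal_step_changes_one_entry)
  then show False
    by (simp add: p_def q_def)
qed

lemma unmatched_tA: "unmatched (P + 3) 0 (reading_word tA) 0 = map ((+) (length below_word)) [0..<z]"
  unfolding tA_def unmatched_window_tableau[of "P + 3", simplified]
  by (simp add: unmatched_replicate_append del: replicate.simps)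

lemma no_common_cover: "\<nexists>T. (tA, T) \<in> crystal_step n lam \<and> (tB, T) \<in> crystal_step n lam"
proof
  assume "\<exists>T. (tA, T) \<in> crystal_step n lam \<and> (tB, T) \<in> crystal_step n lam"
  then obtain T i j where "F_tab i tA = Some T" "F_tab j tB = Some T"
    by (auto simp: crystal_step_def)
  then obtain ka kb where
    ka: "ka \<in> set (unmatched i 0 (reading_word tA) 0)" "ka < length (reading_word tA)"
      "reading_word tA ! ka = i"
      "reading_word T = (reading_word tA)[ka := Suc i]" and
    kb: "kb < length (reading_word tB)" "reading_word T = (reading_word tB)[kb := Suc j]"
    by (blast dest: F_tab_SomeD)
  define p where "p = length below_word + z"
  define q where "q = length below_word + (z + 1 + Suc y + Suc x)"
  have at_p: "reading_word tA ! p = P + 4" "reading_word tB ! p = P + 3"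
    unfolding tA_def tB_def reading_word_window_tableau p_def
    by (simp_all add: nth_append del: replicate.simps)
  have at_q: "reading_word tA ! q = P + 3" "reading_word tB ! q = P + 4"
    unfolding tA_def tB_def reading_word_window_tableau q_def
    by (simp_all add: nth_append del: replicate.simps)
  have "p \<noteq> q"
    by (simp add: p_def q_def)
  have "ka = p \<or> kb = p" "ka = q \<or> kb = q"
    using list_update_eq_imp_differing_index[OF ka(4)[symmetric, unfolded kb(2)]] at_p at_q
    by simp_all
  then consider "ka = p" "kb = q" | "ka = q"
    using \<open>p \<noteq> q\<close> by blast
  then show False
  proof cases
    case 1
    then have "reading_word T ! p = P + 5"
      using ka at_p by simp
    moreover have "reading_word T ! p = P + 3"
      using 1 kb(2) at_p \<open>p \<noteq> q\<close> by simp
    ultimately show False by simp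
  next
    case 2
    then have "i = P + 3"
      using ka(3) at_q by simp
    \<comment> \<open>the entry P+3 at q is bracketed with the P+4 that ends row P+2\<close>
    then have "ka < length below_word + z"
      using ka(1) unmatched_tA by auto
    then show False
      using 2 by (simp add: q_def)
  qed
qed

theorem not_lattice: "\<not> is_lattice (tableaux n lam) (crystal_le n lam)"
proof
  assume "is_lattice (tableaux n lam) (crystal_le n lam)"
  then obtain T where "is_lub (tableaux n lam) (crystal_le n lam) tA tB T"
    using in_tableaux unfolding is_lattice_def by blast
  moreover have "\<not> is_lub (tableaux n lam) (crystal_le n lam) tA tB T"
    using crystal_step_entry_sum in_tableaux paths_to_upper_bounds tD_not_covered_by_tC no_common_cover
    by (intro graded_no_lub) (simp_all add: crystal_le_def)
  ultimately show False
    by blast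
qed

end

theorem lemma5p5:
  fixes lam :: "nat list" and n :: nat
  assumes "is_partition lam"
    and "length lam \<le> n"
    and "\<exists>p\<in>{1..length lam - 2}. lam ! p + 2 \<le> lam ! (p - 1) \<and> lam ! (p + 1) \<le> lam ! p"
  shows "\<not> is_lattice (tableaux n lam) (crystal_le n lam)"
proof -
  obtain p where p: "1 \<le> p" "p + 2 \<le> length lam" "lam ! p + 2 \<le> lam ! (p - 1)"
    using assms(3) by auto
  have "0 < lam ! p" "lam ! (p + 1) \<le> lam ! p"
    using p is_partition_nth_pos[OF assms(1)] is_partition_nth_antimono[OF assms(1)] by auto
  then interpret gap_window lam n "p - 1" "lam ! (p - 1) - 2" "lam ! p - 1" "lam ! (p + 1) - 1"
    using assms(1,2) p is_partition_nth_pos[OF assms(1), of "p + 1"]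
    by unfold_locales auto
  show ?thesis
    by (rule not_lattice)
qed

end
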